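(* Let $(\mathbf S,+,0,\mathscr F)$ be a semilattice with operators. (1) An ideal $I$ of $\mathbf S$ is the $0$-class of some congruence relation if and only if $f(I)\subseteq I$ for every $f\in\mathscr F$. (2) If the ideal $I$ is $\mathscr F$-closed, then the least congruence with $0$-class $I$ is $\eta(I)$, the semilattice congruence generated by $I$ (i.e., by collapsing $I$ to $0$), and it is characterized by: $x\,\eta(I)\,y$ iff $x+i=y+i$ for some $i\in I$. (3) If the ideal $I$ is $\mathscr F$-closed, there is also a greatest congruence $\tau(I)$ with $0$-class $I$, given by: $x\,\tau(I)\,y$ iff for every $h\in\mathscr F^\dagger$, $h(x)\in I\Leftrightarrow h(y)\in I$, where $\mathscr F^\dagger$ is the monoid of maps generated by $\mathscr F$ (including the identity).
   Context: A semilattice with operators $(\mathbf S,+,0,\mathscr F)$ is a join semilattice $(S,+)$ with least element $0$ together with a set $\mathscr F$ of unary maps $S\to S$ each preserving $+$ and $0$. Congruences are equivalence relations compatible with $+$ and every $f\in\mathscr F$. An ideal is a nonempty down-set closed under $+$. *)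

theory Defs
  imports Main
begin

definition join_semilattice :: "'a set \<Rightarrow> ('a \<Rightarrow> 'a \<Rightarrow> 'a) \<Rightarrow> 'a \<Rightarrow> bool" where
  "join_semilattice S p z \<longleftrightarrow>
     z \<in> S \<and>
     (\<forall>x\<in>S. \<forall>y\<in>S. p x y \<in> S) \<and>
     (\<forall>x\<in>S. \<forall>y\<in>S. \<forall>w\<in>S. p (p x y) w = p x (p y w)) \<and>
     (\<forall>x\<in>S. \<forall>y\<in>S. p x y = p y x) \<and>
     (\<forall>x\<in>S. p x x = x) \<and>
     (\<forall>x\<in>S. p z x = x)"

definition semilattice_with_operators ::
  "'a set \<Rightarrow> ('a \<Rightarrow> 'a \<Rightarrow> 'a) \<Rightarrow> 'a \<Rightarrow> ('a \<Rightarrow> 'a) set \<Rightarrow> bool" where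
  "semilattice_with_operators S p z F \<longleftrightarrow>
     join_semilattice S p z \<and>
     (\<forall>f\<in>F. (\<forall>x\<in>S. f x \<in> S) \<and> (\<forall>x\<in>S. \<forall>y\<in>S. f (p x y) = p (f x) (f y)) \<and> f z = z)"

definition sl_le :: "('a \<Rightarrow> 'a \<Rightarrow> 'a) \<Rightarrow> 'a \<Rightarrow> 'a \<Rightarrow> bool" where
  "sl_le p x y \<longleftrightarrow> p x y = y"

definition sl_ideal :: "'a set \<Rightarrow> ('a \<Rightarrow> 'a \<Rightarrow> 'a) \<Rightarrow> 'a set \<Rightarrow> bool" where
  "sl_ideal S p I \<longleftrightarrow>
     I \<subseteq> S \<and> I \<noteq> {} \<and>
     (\<forall>x\<in>S. \<forall>y\<in>I. sl_le p x y \<longrightarrow> x \<in> I) \<and>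
     (\<forall>x\<in>I. \<forall>y\<in>I. p x y \<in> I)"

definition sl_congruence :: "'a set \<Rightarrow> ('a \<Rightarrow> 'a \<Rightarrow> 'a) \<Rightarrow> ('a \<times> 'a) set \<Rightarrow> bool" where
  "sl_congruence S p \<theta> \<longleftrightarrow>
     equiv S \<theta> \<and>
     (\<forall>x y u v. (x, y) \<in> \<theta> \<longrightarrow> (u, v) \<in> \<theta> \<longrightarrow> (p x u, p y v) \<in> \<theta>)"

definition slo_congruence ::
  "'a set \<Rightarrow> ('a \<Rightarrow> 'a \<Rightarrow> 'a) \<Rightarrow> ('a \<Rightarrow> 'a) set \<Rightarrow> ('a \<times> 'a) set \<Rightarrow> bool" where
  "slo_congruence S p F \<theta> \<longleftrightarrow>
     sl_congruence S p \<theta> \<and>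
     (\<forall>f\<in>F. \<forall>x y. (x, y) \<in> \<theta> \<longrightarrow> (f x, f y) \<in> \<theta>)"

definition zero_class :: "'a set \<Rightarrow> 'a \<Rightarrow> ('a \<times> 'a) set \<Rightarrow> 'a set" where
  "zero_class S z \<theta> = {x \<in> S. (x, z) \<in> \<theta>}"

definition eta :: "'a set \<Rightarrow> ('a \<Rightarrow> 'a \<Rightarrow> 'a) \<Rightarrow> 'a set \<Rightarrow> ('a \<times> 'a) set" where
  "eta S p I = \<Inter>{\<theta>. sl_congruence S p \<theta> \<and> I \<times> I \<subseteq> \<theta>}"

inductive_set Fdag :: "('a \<Rightarrow> 'a) set \<Rightarrow> ('a \<Rightarrow> 'a) set" for F where
  Fdag_id: "id \<in> Fdag F"
| Fdag_comp: "f \<in> F \<Longrightarrow> h \<in> Fdag F \<Longrightarrow> f \<circ> h \<in> Fdag F"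

definition tau :: "'a set \<Rightarrow> ('a \<Rightarrow> 'a) set \<Rightarrow> 'a set \<Rightarrow> ('a \<times> 'a) set" where
  "tau S F I = {(x, y). x \<in> S \<and> y \<in> S \<and> (\<forall>h\<in>Fdag F. h x \<in> I \<longleftrightarrow> h y \<in> I)}"

end

theory Submission
  imports Defs
begin

text \<open>The relation "x + i = y + i for some i \<in> I" is a semilattice congruence with 0-class I,
and it is contained in every congruence that collapses I, so it is \<eta>(I); when I is closed under
the operators, applying f to x + i = y + i shows that it respects them as well. For \<tau>(I), the
key point is that for an ideal I and a join homomorphism h, h(x + u) \<in> I iff h(x) \<in> I and
h(u) \<in> I, which makes \<tau>(I) compatible with +. Conversely every operator congruence \<theta> is
preserved by the whole monoid generated by the operators, and its 0-class is a union of
\<theta>-classes, so \<theta> \<subseteq> \<tau>(0-class of \<theta>).\<close>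

definition ideal_cong :: "'a set \<Rightarrow> ('a \<Rightarrow> 'a \<Rightarrow> 'a) \<Rightarrow> 'a set \<Rightarrow> ('a \<times> 'a) set" where
  "ideal_cong S p I = {(x, y). x \<in> S \<and> y \<in> S \<and> (\<exists>i\<in>I. p x i = p y i)}"

lemma Fdag_comp_right: "h \<in> Fdag F \<Longrightarrow> f \<in> F \<Longrightarrow> h \<circ> f \<in> Fdag F"
proof (induction h rule: Fdag.induct)
  case Fdag_id
  then show ?case using Fdag_comp[OF Fdag_id Fdag.Fdag_id] by simp
next
  case (Fdag_comp g h)
  then show ?case by (metis Fdag.Fdag_comp comp_assoc)
qed

lemma Fdag_image_subset: "h \<in> Fdag F \<Longrightarrow> \<forall>f\<in>F. f ` A \<subseteq> A \<Longrightarrow> h ` A \<subseteq> A"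
  by (induction h rule: Fdag.induct) (auto simp: image_subset_iff)

lemma slo_congruence_Fdag:
  "h \<in> Fdag F \<Longrightarrow> slo_congruence S p F \<theta> \<Longrightarrow> (x, y) \<in> \<theta> \<Longrightarrow> (h x, h y) \<in> \<theta>"
  by (induction h rule: Fdag.induct) (auto simp: slo_congruence_def)

lemma zero_class_pair:
  "equiv S \<theta> \<Longrightarrow> x \<in> zero_class S z \<theta> \<Longrightarrow> y \<in> zero_class S z \<theta> \<Longrightarrow> (x, y) \<in> \<theta>"
  unfolding zero_class_def by (blast elim: equivE dest: symD transD)

lemma zero_class_respects:
  "equiv S \<theta> \<Longrightarrow> (x, y) \<in> \<theta> \<Longrightarrow> x \<in> zero_class S z \<theta> \<longleftrightarrow> y \<in> zero_class S z \<theta>"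
  unfolding zero_class_def equiv_def refl_on_def by (blast dest: symD transD)

locale join_semilattice_on =
  fixes S :: "'a set" and p :: "'a \<Rightarrow> 'a \<Rightarrow> 'a" and z :: 'a
  assumes join_semilattice: "join_semilattice S p z"
begin

lemma zero_closed: "z \<in> S"
  and join_closed: "x \<in> S \<Longrightarrow> y \<in> S \<Longrightarrow> p x y \<in> S"
  and join_assoc: "x \<in> S \<Longrightarrow> y \<in> S \<Longrightarrow> w \<in> S \<Longrightarrow> p (p x y) w = p x (p y w)"
  and join_commute: "x \<in> S \<Longrightarrow> y \<in> S \<Longrightarrow> p x y = p y x"
  and join_idem: "x \<in> S \<Longrightarrow> p x x = x"
  and join_zero_left: "x \<in> S \<Longrightarrow> p z x = x"
  using join_semilattice unfolding join_semilattice_def by blast+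

lemma join_zero_right: "x \<in> S \<Longrightarrow> p x z = x"
  using join_commute join_zero_left zero_closed by metis

lemma join_absorb_left: "x \<in> S \<Longrightarrow> y \<in> S \<Longrightarrow> p x (p x y) = p x y"
  using join_assoc[of x x y] join_idem by simp

lemma join_absorb_right: "x \<in> S \<Longrightarrow> y \<in> S \<Longrightarrow> p y (p x y) = p x y"
  using join_absorb_left[of y x] join_commute[of x y] by simp

lemma join_right_commute:
  "x \<in> S \<Longrightarrow> y \<in> S \<Longrightarrow> w \<in> S \<Longrightarrow> p (p x y) w = p (p x w) y"
  using join_assoc join_commute[of y w] by simp

lemma join_interchange:
  assumes "x \<in> S" "y \<in> S" "u \<in> S" "v \<in> S"
  shows "p (p x y) (p u v) = p (p x u) (p y v)"
proof -
  have "p (p x y) (p u v) = p (p (p x y) u) v" using assms join_assoc join_closed by simp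
  also have "\<dots> = p (p (p x u) y) v" using assms join_right_commute by simp
  also have "\<dots> = p (p x u) (p y v)" using assms join_assoc join_closed by simp
  finally show ?thesis .
qed

end

locale sl_ideal_on = join_semilattice_on +
  fixes I :: "'a set"
  assumes ideal: "sl_ideal S p I"
begin

lemma ideal_subset: "I \<subseteq> S"
  and ideal_join_closed: "x \<in> I \<Longrightarrow> y \<in> I \<Longrightarrow> p x y \<in> I"
  and ideal_down_closed: "x \<in> S \<Longrightarrow> y \<in> I \<Longrightarrow> p x y = y \<Longrightarrow> x \<in> I"
  using ideal unfolding sl_ideal_def sl_le_def by blast+

lemma zero_in_ideal: "z \<in> I"
proof -
  obtain y where "y \<in> I" using ideal unfolding sl_ideal_def by blast
  then show ?thesis using ideal_down_closed[of z y] zero_closed join_zero_left ideal_subset by blast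
qed

lemma join_in_ideal_iff: "x \<in> S \<Longrightarrow> y \<in> S \<Longrightarrow> p x y \<in> I \<longleftrightarrow> x \<in> I \<and> y \<in> I"
  using ideal_down_closed[of x "p x y"] ideal_down_closed[of y "p x y"]
    join_absorb_left join_absorb_right ideal_join_closed by blast

lemma equiv_ideal_cong: "equiv S (ideal_cong S p I)"
proof (rule equivI)
  show "ideal_cong S p I \<subseteq> S \<times> S" unfolding ideal_cong_def by auto
  show "refl_on S (ideal_cong S p I)" unfolding refl_on_def ideal_cong_def using zero_in_ideal by blast
  show "sym (ideal_cong S p I)" unfolding sym_def ideal_cong_def by (auto intro: sym)
  show "trans (ideal_cong S p I)" unfolding trans_def ideal_cong_def
  proof clarsimp
    fix x y w i j
    assume xyw: "x \<in> S" "y \<in> S" "w \<in> S" and ij: "i \<in> I" "j \<in> I"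
      and eqs: "p x i = p y i" "p y j = p w j"
    have ijS: "i \<in> S" "j \<in> S" using ij ideal_subset by auto
    have "p x (p i j) = p (p x i) j" using xyw ijS join_assoc by simp
    also have "\<dots> = p (p y j) i" using xyw ijS eqs join_right_commute[of y i j] by simp
    also have "\<dots> = p (p w i) j" using xyw ijS eqs join_right_commute[of w j i] by simp
    also have "\<dots> = p w (p i j)" using xyw ijS join_assoc by simp
    finally have "p x (p i j) = p w (p i j)" .
    then show "\<exists>k\<in>I. p x k = p w k" using ij ideal_join_closed by blast
  qed
qed

lemma sl_congruence_ideal_cong: "sl_congruence S p (ideal_cong S p I)"
  unfolding sl_congruence_def
proof (intro conjI allI impI equiv_ideal_cong)
  fix x y u v assume "(x, y) \<in> ideal_cong S p I" "(u, v) \<in> ideal_cong S p I"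
  then obtain i j where xyuv: "x \<in> S" "y \<in> S" "u \<in> S" "v \<in> S" and ij: "i \<in> I" "j \<in> I"
    and eqs: "p x i = p y i" "p u j = p v j" unfolding ideal_cong_def by auto
  have ijS: "i \<in> S" "j \<in> S" using ij ideal_subset by auto
  have "p (p x u) (p i j) = p (p x i) (p u j)" using join_interchange[of x u i j] xyuv ijS by simp
  also have "\<dots> = p (p y i) (p v j)" using eqs by simp
  also have "\<dots> = p (p y v) (p i j)" using join_interchange[of y v i j] xyuv ijS by simp
  finally show "(p x u, p y v) \<in> ideal_cong S p I"
    unfolding ideal_cong_def using xyuv ij join_closed ideal_join_closed by blast
qed

lemma ideal_square_subset_ideal_cong: "I \<times> I \<subseteq> ideal_cong S p I"
proof clarify
  fix i j assume ij: "i \<in> I" "j \<in> I"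
  then have "i \<in> S" "j \<in> S" using ideal_subset by auto
  then have "p i (p i j) = p j (p i j)" using join_absorb_left join_absorb_right by simp
  then show "(i, j) \<in> ideal_cong S p I"
    unfolding ideal_cong_def using ij ideal_subset ideal_join_closed by blast
qed

text \<open>Since z \<in> I, a congruence identifying I with z relates x = x + z to x + i = y + i to y.\<close>

lemma ideal_cong_subset:
  assumes cong: "sl_congruence S p \<theta>" and square: "I \<times> I \<subseteq> \<theta>"
  shows "ideal_cong S p I \<subseteq> \<theta>"
proof clarify
  fix x y assume "(x, y) \<in> ideal_cong S p I"
  then obtain i where xy: "x \<in> S" "y \<in> S" and i: "i \<in> I" and eq: "p x i = p y i"
    unfolding ideal_cong_def by auto
  have equiv: "equiv S \<theta>"
    and join: "\<And>a b c d. (a, b) \<in> \<theta> \<Longrightarrow> (c, d) \<in> \<theta> \<Longrightarrow> (p a c, p b d) \<in> \<theta>"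
    using cong unfolding sl_congruence_def by blast+
  have "(z, i) \<in> \<theta>" "(i, z) \<in> \<theta>" using square zero_in_ideal i by auto
  moreover have "(x, x) \<in> \<theta>" "(y, y) \<in> \<theta>" using equiv xy by (auto elim: equivE dest: refl_onD)
  ultimately have "(p x z, p x i) \<in> \<theta>" "(p y i, p y z) \<in> \<theta>" using join by auto
  then have "(x, p y i) \<in> \<theta>" "(p y i, y) \<in> \<theta>" using eq xy join_zero_right by auto
  then show "(x, y) \<in> \<theta>" using equiv by (blast elim: equivE dest: transD)
qed

lemma eta_eq_ideal_cong: "eta S p I = ideal_cong S p I"
  unfolding eta_def
proof (rule antisym)
  show "\<Inter>{\<theta>. sl_congruence S p \<theta> \<and> I \<times> I \<subseteq> \<theta>} \<subseteq> ideal_cong S p I"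
    using sl_congruence_ideal_cong ideal_square_subset_ideal_cong by (intro Inter_lower) simp
  show "ideal_cong S p I \<subseteq> \<Inter>{\<theta>. sl_congruence S p \<theta> \<and> I \<times> I \<subseteq> \<theta>}"
    using ideal_cong_subset by (intro Inter_greatest) simp
qed

lemma zero_class_ideal_cong: "zero_class S z (ideal_cong S p I) = I"
proof (intro set_eqI iffI)
  fix x assume "x \<in> zero_class S z (ideal_cong S p I)"
  then obtain i where "x \<in> S" "i \<in> I" "p x i = p z i"
    unfolding zero_class_def ideal_cong_def by auto
  moreover have "p z i = i" using \<open>i \<in> I\<close> ideal_subset join_zero_left by auto
  ultimately show "x \<in> I" using ideal_down_closed[of x i] by simp
next
  fix x assume x: "x \<in> I"
  then have "x \<in> S" using ideal_subset by auto
  then have "p x x = p z x" using join_idem join_zero_left by simp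
  then show "x \<in> zero_class S z (ideal_cong S p I)"
    unfolding zero_class_def ideal_cong_def using x \<open>x \<in> S\<close> zero_closed by blast
qed

lemma ideal_cong_subset_of_zero_class:
  assumes "sl_congruence S p \<theta>" and "zero_class S z \<theta> = I"
  shows "ideal_cong S p I \<subseteq> \<theta>"
proof (rule ideal_cong_subset[OF assms(1)])
  have "equiv S \<theta>" using assms(1) unfolding sl_congruence_def by blast
  then show "I \<times> I \<subseteq> \<theta>" using zero_class_pair[of S \<theta> _ z] assms(2) by auto
qed

end

locale slo_on =
  fixes S :: "'a set" and p :: "'a \<Rightarrow> 'a \<Rightarrow> 'a" and z :: 'a and F :: "('a \<Rightarrow> 'a) set"
  assumes slo: "semilattice_with_operators S p z F"
begin

sublocale join_semilattice_on S p z
  using slo unfolding semilattice_with_operators_def by unfold_locales blast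

lemma op_closed: "f \<in> F \<Longrightarrow> x \<in> S \<Longrightarrow> f x \<in> S"
  and op_join: "f \<in> F \<Longrightarrow> x \<in> S \<Longrightarrow> y \<in> S \<Longrightarrow> f (p x y) = p (f x) (f y)"
  and op_zero: "f \<in> F \<Longrightarrow> f z = z"
  using slo unfolding semilattice_with_operators_def by blast+

lemma Fdag_closed: "h \<in> Fdag F \<Longrightarrow> x \<in> S \<Longrightarrow> h x \<in> S"
  by (induction h arbitrary: x rule: Fdag.induct) (auto simp: op_closed)

lemma Fdag_join: "h \<in> Fdag F \<Longrightarrow> x \<in> S \<Longrightarrow> y \<in> S \<Longrightarrow> h (p x y) = p (h x) (h y)"
  by (induction h arbitrary: x y rule: Fdag.induct) (auto simp: op_join Fdag_closed)

lemma Fdag_zero: "h \<in> Fdag F \<Longrightarrow> h z = z"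
  by (induction h rule: Fdag.induct) (auto simp: op_zero)

lemma op_image_zero_class:
  assumes "slo_congruence S p F \<theta>" and f: "f \<in> F"
  shows "f ` zero_class S z \<theta> \<subseteq> zero_class S z \<theta>"
proof clarify
  fix x assume "x \<in> zero_class S z \<theta>"
  then have "x \<in> S" "(x, z) \<in> \<theta>" unfolding zero_class_def by auto
  then have "f x \<in> S" "(f x, f z) \<in> \<theta>"
    using assms op_closed unfolding slo_congruence_def by auto
  then show "f x \<in> zero_class S z \<theta>" using op_zero[OF f] unfolding zero_class_def by simp
qed

lemma slo_congruence_subset_tau:
  assumes cong: "slo_congruence S p F \<theta>"
  shows "\<theta> \<subseteq> tau S F (zero_class S z \<theta>)"
proof clarify
  fix x y assume xy: "(x, y) \<in> \<theta>"
  have equiv: "equiv S \<theta>" using cong unfolding slo_congruence_def sl_congruence_def by blast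
  then have S: "x \<in> S" "y \<in> S" using xy unfolding equiv_def refl_on_def by auto
  have "h x \<in> zero_class S z \<theta> \<longleftrightarrow> h y \<in> zero_class S z \<theta>" if "h \<in> Fdag F" for h
    using zero_class_respects[OF equiv slo_congruence_Fdag[OF that cong xy]] .
  then show "(x, y) \<in> tau S F (zero_class S z \<theta>)" unfolding tau_def using S by blast
qed

end

locale slo_ideal_on = slo_on S p z F + sl_ideal_on S p z I
  for S :: "'a set" and p z F and I :: "'a set"
begin

lemma slo_congruence_ideal_cong:
  assumes closed: "\<forall>f\<in>F. f ` I \<subseteq> I"
  shows "slo_congruence S p F (ideal_cong S p I)"
  unfolding slo_congruence_def
proof (intro conjI sl_congruence_ideal_cong ballI allI impI)
  fix f x y assume f: "f \<in> F" and "(x, y) \<in> ideal_cong S p I"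
  then obtain i where xy: "x \<in> S" "y \<in> S" and i: "i \<in> I" and eq: "p x i = p y i"
    unfolding ideal_cong_def by auto
  have "p (f x) (f i) = p (f y) (f i)" using op_join[OF f] xy i ideal_subset eq by (metis subsetD)
  moreover have "f i \<in> I" using closed f i by auto
  ultimately show "(f x, f y) \<in> ideal_cong S p I" unfolding ideal_cong_def using op_closed f xy by blast
qed

lemma ex_slo_congruence_zero_class_iff:
  "(\<exists>\<theta>. slo_congruence S p F \<theta> \<and> zero_class S z \<theta> = I) \<longleftrightarrow> (\<forall>f\<in>F. f ` I \<subseteq> I)"
  using op_image_zero_class slo_congruence_ideal_cong zero_class_ideal_cong by blast

lemma slo_congruence_tau: "slo_congruence S p F (tau S F I)"
  unfolding slo_congruence_def sl_congruence_def
proof (intro conjI ballI allI impI)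
  show "equiv S (tau S F I)"
    by (rule equivI) (auto simp: tau_def refl_on_def sym_def trans_def)
next
  fix x y u v assume xy: "(x, y) \<in> tau S F I" and uv: "(u, v) \<in> tau S F I"
  then have S: "x \<in> S" "y \<in> S" "u \<in> S" "v \<in> S" unfolding tau_def by auto
  have "h (p x u) \<in> I \<longleftrightarrow> h (p y v) \<in> I" if h: "h \<in> Fdag F" for h
  proof -
    have "h (p x u) \<in> I \<longleftrightarrow> h x \<in> I \<and> h u \<in> I"
      using S Fdag_join[OF h] Fdag_closed[OF h] join_in_ideal_iff by simp
    also have "\<dots> \<longleftrightarrow> h y \<in> I \<and> h v \<in> I" using xy uv h unfolding tau_def by auto
    also have "\<dots> \<longleftrightarrow> h (p y v) \<in> I"
      using S Fdag_join[OF h] Fdag_closed[OF h] join_in_ideal_iff by simp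
    finally show ?thesis .
  qed
  then show "(p x u, p y v) \<in> tau S F I" unfolding tau_def using S join_closed by auto
next
  fix f x y assume f: "f \<in> F" and xy: "(x, y) \<in> tau S F I"
  then have "h (f x) \<in> I \<longleftrightarrow> h (f y) \<in> I" if "h \<in> Fdag F" for h
    using Fdag_comp_right[OF that f] unfolding tau_def by auto
  then show "(f x, f y) \<in> tau S F I" using xy op_closed f unfolding tau_def by auto
qed

lemma zero_class_tau:
  assumes closed: "\<forall>f\<in>F. f ` I \<subseteq> I"
  shows "zero_class S z (tau S F I) = I"
proof -
  have "x \<in> S \<and> (x, z) \<in> tau S F I \<longleftrightarrow> x \<in> I" for x
  proof
    assume "x \<in> S \<and> (x, z) \<in> tau S F I"
    then show "x \<in> I" using zero_in_ideal Fdag_id unfolding tau_def by fastforce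
  next
    assume x: "x \<in> I"
    have "h x \<in> I" if "h \<in> Fdag F" for h using Fdag_image_subset[OF that closed] x by blast
    then show "x \<in> S \<and> (x, z) \<in> tau S F I"
      using x ideal_subset zero_closed zero_in_ideal unfolding tau_def by (auto simp: Fdag_zero)
  qed
  then show ?thesis unfolding zero_class_def by auto
qed

end

theorem theorem5p1:
  fixes S :: "'a set" and p :: "'a \<Rightarrow> 'a \<Rightarrow> 'a" and z :: 'a and F :: "('a \<Rightarrow> 'a) set"
  assumes slo: "semilattice_with_operators S p z F"
  shows
    "(\<forall>I. sl_ideal S p I \<longrightarrow>
        ((\<exists>\<theta>. slo_congruence S p F \<theta> \<and> zero_class S z \<theta> = I) \<longleftrightarrow> (\<forall>f\<in>F. f ` I \<subseteq> I)))
     \<and> (\<forall>I. sl_ideal S p I \<longrightarrow> (\<forall>f\<in>F. f ` I \<subseteq> I) \<longrightarrow>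
          slo_congruence S p F (eta S p I) \<and> zero_class S z (eta S p I) = I \<and>
          (\<forall>\<theta>. slo_congruence S p F \<theta> \<and> zero_class S z \<theta> = I \<longrightarrow> eta S p I \<subseteq> \<theta>) \<and>
          (\<forall>x y. (x, y) \<in> eta S p I \<longleftrightarrow> x \<in> S \<and> y \<in> S \<and> (\<exists>i\<in>I. p x i = p y i)))
     \<and> (\<forall>I. sl_ideal S p I \<longrightarrow> (\<forall>f\<in>F. f ` I \<subseteq> I) \<longrightarrow>
          slo_congruence S p F (tau S F I) \<and> zero_class S z (tau S F I) = I \<and>
          (\<forall>\<theta>. slo_congruence S p F \<theta> \<and> zero_class S z \<theta> = I \<longrightarrow> \<theta> \<subseteq> tau S F I))"
proof (intro conjI allI impI)
  fix I assume ideal: "sl_ideal S p I"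
  interpret slo_ideal_on S p z F I
    using slo ideal by unfold_locales (auto simp: semilattice_with_operators_def)
  show "(\<exists>\<theta>. slo_congruence S p F \<theta> \<and> zero_class S z \<theta> = I) \<longleftrightarrow> (\<forall>f\<in>F. f ` I \<subseteq> I)"
    by (rule ex_slo_congruence_zero_class_iff)
  assume closed: "\<forall>f\<in>F. f ` I \<subseteq> I"
  show "slo_congruence S p F (eta S p I)" "zero_class S z (eta S p I) = I"
    using slo_congruence_ideal_cong[OF closed] zero_class_ideal_cong by (simp_all add: eta_eq_ideal_cong)
  show "(x, y) \<in> eta S p I \<longleftrightarrow> x \<in> S \<and> y \<in> S \<and> (\<exists>i\<in>I. p x i = p y i)" for x y
    by (simp add: eta_eq_ideal_cong ideal_cong_def)
  show "slo_congruence S p F (tau S F I)" "zero_class S z (tau S F I) = I"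
    using slo_congruence_tau zero_class_tau[OF closed] by simp_all
  fix \<theta> assume "slo_congruence S p F \<theta> \<and> zero_class S z \<theta> = I"
  then show "eta S p I \<subseteq> \<theta>" "\<theta> \<subseteq> tau S F I"
    using ideal_cong_subset_of_zero_class slo_congruence_subset_tau
    by (auto simp: eta_eq_ideal_cong slo_congruence_def)
qed

end
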